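(* Let $s\ge5$ be a fixed integer. There exists a unique real number $\rho(s)>2$ such that $L(\rho(s),s)=0$. Moreover, \[ L(r,s)<0 \text{ for } r\in[2,\rho(s)),\qquad L(r,s)>0 \text{ for } r\in(\rho(s),\infty). \] Furthermore, if $s\ge6$, then $\rho(s)>s$.
   Context: For an integer $s\ge2$ and real $r\ge2$ (with $rs-r-s>0$), define \[ L(r,s)=\frac rs\log(s-1)+(r-1)\log(r-1)-\frac{rs-r-s}{s}\log r-\frac{rs-r-s}{s(s-1)}\log(rs-r-s). \] *)

theory Defs
  imports Complex_Main
begin

text \<open>L(r,s) from the paper; log is the natural logarithm. s is an integer (s >= 2).\<close>
definition L :: "real \<Rightarrow> nat \<Rightarrow> real" where
  "L r s = r / real s * ln (real s - 1) + (r - 1) * ln (r - 1)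
     - (r * real s - r - real s) / real s * ln r
     - (r * real s - r - real s) / (real s * (real s - 1)) * ln (r * real s - r - real s)"

end

theory Submission
  imports Defs "HOL-Analysis.Analysis"
begin

text \<open>The derivative dL of L in r has positive derivative for 2 \<le> r \<le> (s+1)/2 and is positive
  beyond, so once dL is nonnegative it stays positive. By the mean value theorem, L is therefore
  strictly increasing to the right of any point where it exceeds its value at 2, so it crosses
  zero at most once. The crossing exists since L(2,s) < 0 < L(exp(s-1),s), and it lies
  beyond s because L(s,s) < 0 for s \<ge> 6. These sign facts reduce to elementary logarithmic
  inequalities, which for small s are checked as inequalities between integers.\<close>

lemma increasing_after_rise:
  fixes f f' :: "real \<Rightarrow> real"
  assumes deriv: "\<And>x. a \<le> x \<Longrightarrow> (f has_real_derivative f' x) (at x)"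
    and slope: "\<And>x y. a \<le> x \<Longrightarrow> x < y \<Longrightarrow> f' x \<ge> 0 \<Longrightarrow> f' y > 0"
    and "a \<le> x" and rise: "f a < f x" and "x < y"
  shows "f x < f y"
proof -
  have "a < x" using \<open>a \<le> x\<close> rise by (cases "a = x") auto
  then obtain \<xi> where \<xi>: "a < \<xi>" "\<xi> < x" "f x - f a = (x - a) * f' \<xi>"
    using MVT2[of a x f f'] deriv by auto
  have "(x - a) * f' \<xi> > 0" using \<xi>(3) rise by simp
  then have "f' \<xi> > 0" using \<open>a < x\<close> by (simp add: zero_less_mult_iff)
  show ?thesis
  proof (rule DERIV_pos_imp_increasing[OF \<open>x < y\<close>])
    fix t assume "x \<le> t" "t \<le> y"
    then show "\<exists>d. (f has_real_derivative d) (at t) \<and> d > 0"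
      using deriv slope[of \<xi> t] \<xi> \<open>f' \<xi> > 0\<close> by (intro exI[of _ "f' t"]) auto
  qed
qed

lemma exists_single_sign_change:
  fixes f f' :: "real \<Rightarrow> real"
  assumes deriv: "\<And>x. a \<le> x \<Longrightarrow> (f has_real_derivative f' x) (at x)"
    and slope: "\<And>x y. a \<le> x \<Longrightarrow> x < y \<Longrightarrow> f' x \<ge> 0 \<Longrightarrow> f' y > 0"
    and "f a < 0" "a \<le> b" "f b > 0"
  shows "\<exists>\<rho>>a. f \<rho> = 0 \<and> (\<forall>r. a \<le> r \<and> r < \<rho> \<longrightarrow> f r < 0) \<and> (\<forall>r>\<rho>. f r > 0)"
proof -
  have "\<exists>\<rho>. a \<le> \<rho> \<and> \<rho> \<le> b \<and> f \<rho> = 0"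
    using assms by (intro IVT) (auto intro: DERIV_isCont)
  then obtain \<rho> where "a \<le> \<rho>" "f \<rho> = 0" by blast
  have increasing: "f x < f y" if "a \<le> x" "f a < f x" "x < y" for x y
    using increasing_after_rise[where f=f and f'=f' and a=a and x=x and y=y] deriv slope that
    by blast
  have "\<rho> > a" using \<open>a \<le> \<rho>\<close> \<open>f \<rho> = 0\<close> \<open>f a < 0\<close> by (cases "\<rho> = a") auto
  moreover have "f r < 0" if "a \<le> r" "r < \<rho>" for r
  proof (rule ccontr)
    assume "\<not> f r < 0"
    then have "f r < f \<rho>" using increasing[of r \<rho>] \<open>f a < 0\<close> that by auto
    then show False using \<open>\<not> f r < 0\<close> \<open>f \<rho> = 0\<close> by simp
  qed
  moreover have "f r > 0" if "r > \<rho>" for r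
    using increasing[of \<rho> r] \<open>a \<le> \<rho>\<close> \<open>f a < 0\<close> \<open>f \<rho> = 0\<close> that by auto
  ultimately show ?thesis using \<open>f \<rho> = 0\<close> by blast
qed

definition dL :: "nat \<Rightarrow> real \<Rightarrow> real" where
  "dL s r = ln (r - 1) - ln r + 1 / r
     + (ln r + ln (real s - 1) - ln (r * real s - r - real s)) / real s"

lemma L_arg_pos:
  assumes "3 \<le> s" "2 \<le> r" shows "r * real s - r - real s > 0"
proof -
  have "(r - 1) * (real s - 1) \<ge> 1 * 2" using assms by (intro mult_mono) auto
  then show ?thesis by (simp add: algebra_simps)
qed

lemma has_real_derivative_L:
  assumes "2 \<le> s" "r > 1" "r * real s - r - real s > 0"
  shows "((\<lambda>r. L r s) has_real_derivative dL s r) (at r)"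
proof -
  have "real s \<noteq> 0" "real s - 1 \<noteq> 0" using assms(1) by auto
  then show ?thesis unfolding L_def dL_def using assms
    by (auto intro!: derivative_eq_intros simp: divide_simps) (simp add: algebra_simps)
qed

lemma has_real_derivative_dL:
  assumes "2 \<le> s" "r > 1" "r * real s - r - real s > 0"
  shows "(dL s has_real_derivative
           (real s * r - r\<^sup>2 - real s) / (r\<^sup>2 * (r - 1) * (r * real s - r - real s))) (at r)"
proof -
  define B where "B = r * real s - r - real s"
  have "real s \<noteq> 0" "B > 0" using assms(1,3) by (auto simp: B_def)
  have "(dL s has_real_derivative
          1 / (r - 1) - 1 / r - 1 / r\<^sup>2 + (1 / r - (real s - 1) / B) / real s) (at r)"
    unfolding dL_def B_def using assms \<open>real s \<noteq> 0\<close>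
    by (auto intro!: derivative_eq_intros simp: power2_eq_square)
  also have "1 / (r - 1) - 1 / r - 1 / r\<^sup>2 + (1 / r - (real s - 1) / B) / real s
      = (real s * r - r\<^sup>2 - real s) / (r\<^sup>2 * (r - 1) * B)"
    using assms \<open>real s \<noteq> 0\<close> \<open>B > 0\<close>
    by (simp add: field_simps power2_eq_square) (simp add: B_def algebra_simps)
  finally show ?thesis unfolding B_def .
qed

lemma dL_derivative_pos:
  assumes "5 \<le> s" "2 \<le> r" "2 * r \<le> real s + 1"
  shows "(real s * r - r\<^sup>2 - real s) / (r\<^sup>2 * (r - 1) * (r * real s - r - real s)) > 0"
proof -
  have "(r - 2) * (2 * r - (real s + 1)) \<le> 0"
    using assms by (intro mult_nonneg_nonpos) auto
  moreover have "real s * r \<ge> 5 * r" using assms by (intro mult_right_mono) auto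
  ultimately have "real s * r - r\<^sup>2 - real s > 0"
    by (simp add: algebra_simps power2_eq_square)
  moreover have "r * real s - r - real s > 0" using assms by (intro L_arg_pos) auto
  ultimately show ?thesis using assms by simp
qed

lemma dL_pos_large:
  assumes "3 \<le> s" "2 \<le> r" "real s + 1 \<le> 2 * r"
  shows "dL s r > 0"
proof -
  define B where "B = r * real s - r - real s"
  have "B > 0" unfolding B_def using assms by (intro L_arg_pos) auto
  have "ln r - ln (r - 1) \<le> (inverse (r - 1) + inverse r) / 2"
    using ln_inverse_approx_le[of "r - 1" 1] assms by simp
  moreover have "(ln r + ln (real s - 1) - ln B) / real s \<ge> 2 / (2 * B + real s)"
  proof -
    have "ln (B + real s) - ln B \<ge> 2 * real s / (2 * B + real s)"
      using ln_inverse_approx_ge[of B "B + real s"] \<open>B > 0\<close> assms by simp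
    moreover have "ln (B + real s) = ln r + ln (real s - 1)"
      using assms by (simp add: B_def ln_mult_pos[symmetric] algebra_simps)
    ultimately show ?thesis using assms by (simp add: field_simps)
  qed
  ultimately have "dL s r \<ge> 1 / r - (inverse (r - 1) + inverse r) / 2 + 2 / (2 * B + real s)"
    unfolding dL_def B_def[symmetric] by linarith
  moreover have "1 / r - (inverse (r - 1) + inverse r) / 2 = - 1 / (2 * r * (r - 1))"
    using assms by (simp add: field_simps)
  moreover have "2 / (2 * B + real s) > 1 / (2 * r * (r - 1))"
  proof -
    have "2 * r * (2 * r - (real s + 1)) \<ge> 0" using assms by simp
    then have "2 * B + real s < 4 * r * (r - 1)" using assms by (simp add: B_def algebra_simps)
    then show ?thesis using \<open>B > 0\<close> assms by (simp add: field_simps)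
  qed
  ultimately show ?thesis by linarith
qed

lemma dL_pos_after_nonneg:
  assumes "5 \<le> s" "2 \<le> x" "x < y" "dL s x \<ge> 0"
  shows "dL s y > 0"
proof (cases "real s + 1 \<le> 2 * y")
  case True
  then show ?thesis using dL_pos_large assms by auto
next
  case False
  have "dL s x < dL s y"
  proof (rule DERIV_pos_imp_increasing[OF \<open>x < y\<close>])
    fix t assume "x \<le> t" "t \<le> y"
    then have "2 \<le> t" "2 * t \<le> real s + 1" using assms False by auto
    then show "\<exists>d. (dL s has_real_derivative d) (at t) \<and> d > 0"
      using has_real_derivative_dL[of s t] dL_derivative_pos[of s t] L_arg_pos[of s t] assms
      by auto
  qed
  then show ?thesis using assms by linarith
qed

lemma square_less_power_two: "7 \<le> m \<Longrightarrow> (m::nat)\<^sup>2 < 2 ^ (m - 1)"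
proof (induction m rule: dec_induct)
  case base
  then show ?case by simp
next
  case (step n)
  have "7 * n \<le> n * n" using step(1) by (intro mult_right_mono) auto
  then have "2 * n + 1 \<le> n * n" using step(1) by linarith
  then have "(Suc n)\<^sup>2 \<le> 2 * n\<^sup>2" by (simp add: power2_eq_square)
  also have "\<dots> < 2 * 2 ^ (n - 1)" using step(3) by simp
  also have "\<dots> = 2 ^ (Suc n - 1)" using step(1) by (cases n) auto
  finally show ?case .
qed

lemma power_less_power_two_times_power:
  assumes "4 \<le> m" shows "(m::nat) ^ (2 * m) < 2 ^ (m * (m - 1)) * (m - 1) ^ (m - 1)"
proof (cases "7 \<le> m")
  case True
  have "m ^ (2 * m) = (m\<^sup>2) ^ m" by (simp add: power_mult)
  also have "\<dots> < (2 ^ (m - 1)) ^ m"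
    using square_less_power_two[OF True] assms by (intro power_strict_mono) auto
  also have "\<dots> = 2 ^ (m * (m - 1))" by (simp add: power_mult[symmetric] mult.commute)
  also have "\<dots> \<le> 2 ^ (m * (m - 1)) * (m - 1) ^ (m - 1)" using assms by simp
  finally show ?thesis .
next
  case False
  then have "m = 4 \<or> m = 5 \<or> m = 6" using assms by auto
  then show ?thesis by auto
qed

lemma L_two_neg:
  assumes "5 \<le> s" shows "L 2 s < 0"
proof -
  define m where "m = s - 1"
  have "4 \<le> m" and m: "real m = real s - 1" "real (m - 1) = real s - 2"
    using assms by (auto simp: m_def of_nat_diff)
  have "ln (real (m ^ (2 * m))) < ln (real (2 ^ (m * (m - 1)) * (m - 1) ^ (m - 1)))"
    using power_less_power_two_times_power[OF \<open>4 \<le> m\<close>] \<open>4 \<le> m\<close>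
    by (subst ln_less_cancel_iff) (auto simp del: of_nat_power of_nat_mult)
  then have "2 * (real s - 1) * ln (real s - 1)
      < (real s - 1) * (real s - 2) * ln 2 + (real s - 2) * ln (real s - 2)"
    using \<open>4 \<le> m\<close> m by (simp add: ln_mult_pos ln_realpow of_nat_diff)
  moreover have "L 2 s * (real s * (real s - 1))
      = 2 * (real s - 1) * ln (real s - 1) - (real s - 1) * (real s - 2) * ln 2
        - (real s - 2) * ln (real s - 2)"
    using assms by (simp add: L_def field_simps)
  ultimately have "L 2 s * (real s * (real s - 1)) < 0" by simp
  moreover have "real s * (real s - 1) > 0" using assms by simp
  ultimately show ?thesis using mult_nonneg_nonneg[of "L 2 s" "real s * (real s - 1)"] by linarith
qed

lemma L_lower_bound:
  assumes "3 \<le> s" "2 \<le> r"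
  shows "L r s > (ln (real s - 1) + ln r) / (real s - 1) - 1"
proof -
  define B where "B = r * real s - r - real s"
  have "B > 0" unfolding B_def using assms by (intro L_arg_pos)
  have "ln B < ln (r * (real s - 1))"
    using \<open>B > 0\<close> assms by (simp add: B_def algebra_simps)
  then have "ln B < ln r + ln (real s - 1)" using assms by (simp add: ln_mult_pos)
  then have "B / (real s * (real s - 1)) * ln B
      < B / (real s * (real s - 1)) * (ln r + ln (real s - 1))"
    using \<open>B > 0\<close> assms by (intro mult_strict_left_mono) auto
  then have "L r s > r / real s * ln (real s - 1) + (r - 1) * ln (r - 1) - B / real s * ln r
      - B / (real s * (real s - 1)) * (ln r + ln (real s - 1))"
    unfolding L_def B_def[symmetric] by linarith
  moreover have "r / real s * ln (real s - 1) + (r - 1) * ln (r - 1) - B / real s * ln r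
      - B / (real s * (real s - 1)) * (ln r + ln (real s - 1))
      = (ln (real s - 1) + ln r) / (real s - 1) + (r - 1) * (ln (r - 1) - ln r)"
    using assms by (simp add: B_def field_simps)
  moreover have "(r - 1) * (ln (r - 1) - ln r) \<ge> -1"
  proof -
    have "ln r - ln (r - 1) \<le> 1 / (r - 1)" using ln_diff_le[of r "r - 1"] assms by simp
    then show ?thesis using assms by (simp add: field_simps)
  qed
  ultimately show ?thesis by linarith
qed

lemma L_pos_at_exp:
  assumes "3 \<le> s" shows "L (exp (real s - 1)) s > 0"
proof -
  have "exp (real s - 1) \<ge> 2" using exp_ge_add_one_self[of "real s - 1"] assms by simp
  have "0 < ln (real s - 1) / (real s - 1)" using assms by simp
  also have "\<dots> = (ln (real s - 1) + ln (exp (real s - 1))) / (real s - 1) - 1"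
    using assms by (simp add: field_simps)
  also have "\<dots> < L (exp (real s - 1)) s"
    by (rule L_lower_bound[OF assms \<open>exp (real s - 1) \<ge> 2\<close>])
  finally show ?thesis .
qed

lemma exp_one_gt_27_10: "exp 1 > (27 / 10 :: real)"
  using e_approx_32 by (simp add: abs_if split: if_split_asm)

lemma self_log_inequality_large:
  fixes x :: real
  assumes "12 \<le> x"
  shows "x * (x - 1) * ln (x - 1) < x * (x - 2) * ln x + (x - 2) * ln (x - 2)"
proof -
  have "x * (x - 1) * (ln (x - 1) - ln x) \<le> x * (x - 1) * (- 1 / x)"
    using ln_diff_le[of "x - 1" x] assms by (intro mult_left_mono) auto
  also have "\<dots> = - (x - 1)" using assms by simp
  finally have A: "x * (x - 1) * (ln (x - 1) - ln x) \<le> - (x - 1)" .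
  have "(x - 2) * (ln x - ln (x - 2)) \<le> (x - 2) * (2 / (x - 2))"
    using ln_diff_le[of x "x - 2"] assms by (intro mult_left_mono) auto
  also have "\<dots> = 2" using assms by (simp add: field_simps)
  finally have B: "(x - 2) * (ln x - ln (x - 2)) \<le> 2" .
  have "ln x \<le> x / exp 1"
    using ln_diff_le[of x "exp 1"] assms by (simp add: field_simps)
  also have "\<dots> < x / (27 / 10)"
    using exp_one_gt_27_10 assms by (intro divide_strict_left_mono) auto
  finally have C: "ln x < 10 * x / 27" by simp
  have "x * (x - 1) * ln (x - 1) - (x * (x - 2) * ln x + (x - 2) * ln (x - 2))
      = x * (x - 1) * (ln (x - 1) - ln x) + 2 * ln x + (x - 2) * (ln x - ln (x - 2))"
    by (simp add: algebra_simps)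
  then show ?thesis using A B C assms by linarith
qed

lemma self_power_inequality_small:
  "(m::nat) \<in> {5..10} \<Longrightarrow> m ^ ((m + 1) * m) < (m + 1) ^ ((m + 1) * (m - 1)) * (m - 1) ^ (m - 1)"
proof -
  assume "m \<in> {5..10}"
  then have "m = 5 \<or> m = 6 \<or> m = 7 \<or> m = 8 \<or> m = 9 \<or> m = 10" by auto
  then show ?thesis by auto
qed

lemma self_log_inequality:
  assumes "6 \<le> s"
  shows "real s * (real s - 1) * ln (real s - 1)
    < real s * (real s - 2) * ln (real s) + (real s - 2) * ln (real s - 2)"
proof (cases "s \<le> 11")
  case True
  define m where "m = s - 1"
  have "m \<in> {5..10}" using True assms by (auto simp: m_def)
  have m: "real s = real m + 1" "real (m - 1) = real m - 1"
    using assms by (auto simp: m_def of_nat_diff)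
  have "ln (real (m ^ ((m + 1) * m)))
      < ln (real ((m + 1) ^ ((m + 1) * (m - 1)) * (m - 1) ^ (m - 1)))"
    using self_power_inequality_small[OF \<open>m \<in> {5..10}\<close>] \<open>m \<in> {5..10}\<close>
    by (subst ln_less_cancel_iff) (auto simp del: of_nat_power of_nat_mult)
  then have "(real m + 1) * real m * ln (real m)
      < (real m + 1) * (real m - 1) * ln (real m + 1) + (real m - 1) * ln (real m - 1)"
    using \<open>m \<in> {5..10}\<close> m
    by (simp add: ln_mult_pos ln_realpow of_nat_diff add.commute) (simp add: algebra_simps)
  then show ?thesis using m by simp
next
  case False
  then show ?thesis by (intro self_log_inequality_large) simp
qed

lemma L_self_neg:
  assumes "6 \<le> s" shows "L (real s) s < 0"
proof -
  have "ln (real s * (real s - 2)) = ln (real s) + ln (real s - 2)"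
    using assms by (simp add: ln_mult_pos)
  then have "(real s - 1) * L (real s) s = real s * (real s - 1) * ln (real s - 1)
      - (real s * (real s - 2) * ln (real s) + (real s - 2) * ln (real s - 2))"
    using assms unfolding L_def by (simp add: field_simps)
  then have "(real s - 1) * L (real s) s < 0" using self_log_inequality[OF assms] by simp
  moreover have "real s - 1 > 0" using assms by simp
  ultimately show ?thesis using mult_nonneg_nonneg[of "real s - 1" "L (real s) s"] by linarith
qed

theorem lemma6p2:
  fixes s :: nat
  assumes "s \<ge> 5"
  shows "\<exists>\<rho>::real. \<rho> > 2 \<and> L \<rho> s = 0
           \<and> (\<forall>\<rho>'. \<rho>' > 2 \<and> L \<rho>' s = 0 \<longrightarrow> \<rho>' = \<rho>)
           \<and> (\<forall>r. 2 \<le> r \<and> r < \<rho> \<longrightarrow> L r s < 0)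
           \<and> (\<forall>r. \<rho> < r \<longrightarrow> L r s > 0)
           \<and> (s \<ge> 6 \<longrightarrow> \<rho> > real s)"
proof -
  have deriv: "((\<lambda>r. L r s) has_real_derivative dL s r) (at r)" if "2 \<le> r" for r
    using assms that by (intro has_real_derivative_L L_arg_pos) auto
  have "2 \<le> exp (real s - 1)" using exp_ge_add_one_self[of "real s - 1"] assms by simp
  then obtain \<rho> where "\<rho> > 2" "L \<rho> s = 0"
    and neg: "\<forall>r. 2 \<le> r \<and> r < \<rho> \<longrightarrow> L r s < 0" and pos: "\<forall>r>\<rho>. L r s > 0"
    using exists_single_sign_change[where f = "\<lambda>r. L r s" and f' = "dL s" and a = 2,
        OF deriv dL_pos_after_nonneg[OF assms] L_two_neg[OF assms]] L_pos_at_exp assms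
    by fastforce
  have "\<rho>' = \<rho>" if "\<rho>' > 2" "L \<rho>' s = 0" for \<rho>'
    using neg pos that by (metis less_le_not_le linorder_neqE_linordered_idom)
  moreover have "\<rho> > real s" if "s \<ge> 6"
    using pos L_self_neg[OF that] by (metis not_less_iff_gr_or_eq \<open>L \<rho> s = 0\<close>)
  ultimately show ?thesis using \<open>\<rho> > 2\<close> \<open>L \<rho> s = 0\<close> neg pos by blast
qed

end
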